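(* Let $G$ be a graph and $B\subseteq V(G)$. Then $B$ is a $1$-edge-leaky forcing set of $G$ if and only if for every $v\in V(G)\setminus B$ there exist forces $x\to v$ and $y\to v$ in $\mathcal{F}(B)$ with $x\neq y$.
   Context: All graphs are finite, simple and undirected. Zero forcing: vertices are blue or white; a blue vertex $u$ with exactly one white neighbor $w$ may force $w$ (color it blue), written $u\to w$. Starting from an initial blue set $B$, a forcing sequence is a chronologically ordered list of forces, each valid at the moment it is performed. $B$ is a zero forcing set if some forcing sequence colors all of $V(G)$ blue; the set of forces of such a sequence is called a forcing process of $B$. $\mathcal{F}(B)$ denotes the set of all forces $u\to v$ that occur in some forcing process of $B$ (one that colors all of $G$ blue). An edge leak is an edge $xy\in E(G)$ across which no force may be performed (neither $x\to y$ nor $y\to x$ is allowed). $B$ is an $\ell$-edge-leaky forcing set if for every set $L$ of at most $\ell$ edge leaks, exhaustively applying the forcing rule from $B$ without ever forcing across an edge of $L$ colors all of $V(G)$ blue. *)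

theory Defs
  imports Main
begin

definition simple_graph :: "'a set \<Rightarrow> ('a \<Rightarrow> 'a \<Rightarrow> bool) \<Rightarrow> bool" where
  "simple_graph V E \<longleftrightarrow> finite V \<and> (\<forall>x y. E x y \<longrightarrow> E y x) \<and> (\<forall>x. \<not> E x x)
     \<and> (\<forall>x y. E x y \<longrightarrow> x \<in> V \<and> y \<in> V)"

definition valid_force :: "'a set \<Rightarrow> ('a \<Rightarrow> 'a \<Rightarrow> bool) \<Rightarrow> 'a set \<Rightarrow> 'a \<Rightarrow> 'a \<Rightarrow> bool" where
  "valid_force V E S u w \<longleftrightarrow> u \<in> V \<and> w \<in> V \<and> E u w \<and> u \<in> S \<and> w \<notin> S \<and>
     (\<forall>z\<in>V. E u z \<and> z \<notin> S \<longrightarrow> z = w)"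

text \<open>Forcing sequence from blue set S, never forcing across an edge of the leak set L
  (edges are represented as two-element sets).\<close>
fun forcing_seq :: "'a set \<Rightarrow> ('a \<Rightarrow> 'a \<Rightarrow> bool) \<Rightarrow> 'a set set \<Rightarrow> 'a set \<Rightarrow> ('a \<times> 'a) list \<Rightarrow> bool" where
  "forcing_seq V E L S [] = True"
| "forcing_seq V E L S ((u, w) # fs) =
     (valid_force V E S u w \<and> {u, w} \<notin> L \<and> forcing_seq V E L (insert w S) fs)"

definition final_blue :: "'a set \<Rightarrow> ('a \<times> 'a) list \<Rightarrow> 'a set" where
  "final_blue S fs = S \<union> snd ` set fs"

definition forcing_process :: "'a set \<Rightarrow> ('a \<Rightarrow> 'a \<Rightarrow> bool) \<Rightarrow> 'a set \<Rightarrow> ('a \<times> 'a) set \<Rightarrow> bool" where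
  "forcing_process V E B P \<longleftrightarrow>
     (\<exists>fs. forcing_seq V E {} B fs \<and> final_blue B fs = V \<and> P = set fs)"

definition all_forces :: "'a set \<Rightarrow> ('a \<Rightarrow> 'a \<Rightarrow> bool) \<Rightarrow> 'a set \<Rightarrow> ('a \<times> 'a) set" where
  "all_forces V E B = \<Union> {P. forcing_process V E B P}"

definition edge_set :: "('a \<Rightarrow> 'a \<Rightarrow> bool) \<Rightarrow> 'a set set" where
  "edge_set E = {{x, y} | x y. E x y}"

text \<open>B is l-edge-leaky forcing: for every set L of at most l edge leaks, exhaustively applying
  the forcing rule (i.e. any forcing sequence avoiding L that cannot be extended) colours all of V.\<close>
definition edge_leaky_forcing_set :: "'a set \<Rightarrow> ('a \<Rightarrow> 'a \<Rightarrow> bool) \<Rightarrow> nat \<Rightarrow> 'a set \<Rightarrow> bool" where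
  "edge_leaky_forcing_set V E l B \<longleftrightarrow>
     (\<forall>L. L \<subseteq> edge_set E \<and> card L \<le> l \<longrightarrow>
        (\<forall>fs. forcing_seq V E L B fs \<and>
              \<not> (\<exists>u w. valid_force V E (final_blue B fs) u w \<and> {u, w} \<notin> L)
              \<longrightarrow> final_blue B fs = V))"

end

theory Submission
  imports Defs
begin

text \<open>
  (\<Rightarrow>) Without leaks, B forces all of G, so some forcing process forces v, say by x.
  Leaking the edge xv, B still forces all of G, and the force onto v now comes from some y \<noteq> x.

  (\<Leftarrow>) Suppose forcing with the single leak e stalls at a blue set S \<noteq> V. In any complete
  forcing process of B, the first force leaving S is valid at S, so it must cross e. Hence the
  endpoint b \<notin> S of e is forced from its endpoint in S in every forcing process of B, contradicting
  the existence of two distinct forces onto b in F(B); each vertex is forced only once in a process.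
\<close>

definition stalled :: "'a set \<Rightarrow> ('a \<Rightarrow> 'a \<Rightarrow> bool) \<Rightarrow> 'a set set \<Rightarrow> 'a set \<Rightarrow> bool" where
  "stalled V E L S \<longleftrightarrow> \<not> (\<exists>u w. valid_force V E S u w \<and> {u, w} \<notin> L)"

lemma edge_leaky_forcing_set_iff_stalled:
  "edge_leaky_forcing_set V E l B \<longleftrightarrow>
     (\<forall>L fs. L \<subseteq> edge_set E \<and> card L \<le> l \<and> forcing_seq V E L B fs \<and>
        stalled V E L (final_blue B fs) \<longrightarrow> final_blue B fs = V)"
  unfolding edge_leaky_forcing_set_def stalled_def by blast

lemma all_forces_iff:
  "(x, v) \<in> all_forces V E B \<longleftrightarrow>
     (\<exists>fs. forcing_seq V E {} B fs \<and> final_blue B fs = V \<and> (x, v) \<in> set fs)"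
  unfolding all_forces_def forcing_process_def by blast

lemma final_blue_Cons: "final_blue T ((u, w) # fs) = final_blue (insert w T) fs"
  by (auto simp: final_blue_def)

lemma finite_edge_set: "simple_graph V E \<Longrightarrow> finite (edge_set E)"
  by (rule finite_subset[of _ "Pow V"]) (auto simp: edge_set_def simple_graph_def)

lemma forcing_seq_forceD:
  assumes "forcing_seq V E L T fs" "(a, b) \<in> set fs"
  shows "{a, b} \<notin> L \<and> E a b \<and> b \<in> V \<and> b \<notin> T"
  using assms
proof (induction fs arbitrary: T)
  case (Cons p fs)
  then show ?case by (cases p) (auto simp: valid_force_def)
qed simp

lemma forcing_seq_forcer_unique:
  assumes "forcing_seq V E L T fs" "(x, b) \<in> set fs" "(y, b) \<in> set fs"
  shows "x = y"
  using assms
proof (induction fs arbitrary: T)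
  case (Cons p fs)
  obtain u w where p: "p = (u, w)" by fastforce
  have tail: "forcing_seq V E L (insert w T) fs" using Cons.prems p by simp
  show ?case
  proof (cases "(x, b) \<in> set fs \<and> (y, b) \<in> set fs")
    case True
    then show ?thesis using Cons.IH tail by blast
  next
    case False
    then have "b = w" using Cons.prems p by auto
    then show ?thesis
      using Cons.prems p forcing_seq_forceD[OF tail, of x b] forcing_seq_forceD[OF tail, of y b]
      by auto
  qed
qed simp

lemma forcing_seq_antimono_leaks:
  "forcing_seq V E L T fs \<Longrightarrow> L' \<subseteq> L \<Longrightarrow> forcing_seq V E L' T fs"
  by (induction fs arbitrary: T) auto

lemma final_blue_subset:
  "forcing_seq V E L T fs \<Longrightarrow> T \<subseteq> V \<Longrightarrow> final_blue T fs \<subseteq> V"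
  unfolding final_blue_def using forcing_seq_forceD by fastforce

lemma exists_stalled_forcing_seq:
  assumes "finite V"
  shows "\<exists>fs. forcing_seq V E L T fs \<and> stalled V E L (final_blue T fs)"
proof (induction "card (V - T)" arbitrary: T rule: less_induct)
  case less
  show ?case
  proof (cases "stalled V E L T")
    case True
    then show ?thesis by (intro exI[of _ "[]"]) (simp add: final_blue_def)
  next
    case False
    then obtain u w where uw: "valid_force V E T u w" "{u, w} \<notin> L"
      unfolding stalled_def by blast
    then have "w \<in> V - T" by (auto simp: valid_force_def)
    then have "card (V - insert w T) < card (V - T)"
      using assms by (metis Diff_insert card_Diff1_less finite_Diff)
    then obtain fs where "forcing_seq V E L (insert w T) fs"
        "stalled V E L (final_blue (insert w T) fs)"
      using less by blast
    then show ?thesis using uw by (intro exI[of _ "(u, w) # fs"]) (simp add: final_blue_Cons)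
  qed
qed

lemma edge_leaky_forcing_set_complete_seq:
  assumes "edge_leaky_forcing_set V E l B" "finite V" "L \<subseteq> edge_set E" "card L \<le> l"
  obtains fs where "forcing_seq V E L B fs" "final_blue B fs = V"
proof -
  obtain fs where "forcing_seq V E L B fs" "stalled V E L (final_blue B fs)"
    using exists_stalled_forcing_seq[OF assms(2)] by blast
  with assms show ?thesis using that unfolding edge_leaky_forcing_set_iff_stalled by blast
qed

text \<open>Forces onto vertices outside S need only the neighbourhood inside S to be blue, so
  the first force of a sequence leaving S is valid at S itself.\<close>

lemma first_force_leaving:
  assumes "forcing_seq V E {} T fs" "T \<subseteq> S" "\<not> final_blue T fs \<subseteq> S"
  shows "\<exists>u w. (u, w) \<in> set fs \<and> u \<in> S \<and> w \<notin> S \<and> valid_force V E S u w"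
  using assms
proof (induction fs arbitrary: T)
  case Nil
  then show ?case by (simp add: final_blue_def)
next
  case (Cons p fs)
  obtain u w where p: "p = (u, w)" by fastforce
  have valid: "valid_force V E T u w" and tail: "forcing_seq V E {} (insert w T) fs"
    using Cons.prems p by auto
  show ?case
  proof (cases "w \<in> S")
    case True
    then have "insert w T \<subseteq> S" "\<not> final_blue (insert w T) fs \<subseteq> S"
      using Cons.prems p by (auto simp: final_blue_Cons)
    then show ?thesis using Cons.IH tail p by fastforce
  next
    case False
    have "u \<in> S" using valid Cons.prems(2) unfolding valid_force_def by blast
    moreover have "valid_force V E S u w"
      using valid False \<open>u \<in> S\<close> Cons.prems(2) unfolding valid_force_def by blast
    ultimately show ?thesis using p False by auto
  qed
qed

lemma stalled_complete_seq_crosses_leak: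
  assumes "stalled V E L S" "T \<subseteq> S" "forcing_seq V E {} T fs" "\<not> final_blue T fs \<subseteq> S"
  shows "\<exists>u w. (u, w) \<in> set fs \<and> u \<in> S \<and> w \<notin> S \<and> {u, w} \<in> L"
  using first_force_leaving[OF assms(3,2,4)] assms(1) unfolding stalled_def by blast

lemma edge_leaky_1_two_forcers:
  assumes "finite V" "edge_leaky_forcing_set V E 1 B" "v \<in> V - B"
  shows "\<exists>x y. (x, v) \<in> all_forces V E B \<and> (y, v) \<in> all_forces V E B \<and> x \<noteq> y"
proof -
  obtain fs0 where fs0: "forcing_seq V E {} B fs0" "final_blue B fs0 = V"
    using edge_leaky_forcing_set_complete_seq[OF assms(2,1), of "{}"] by auto
  then obtain x where x: "(x, v) \<in> set fs0"
    using assms(3) by (auto simp: final_blue_def)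
  have "{x, v} \<in> edge_set E"
    using forcing_seq_forceD[OF fs0(1) x] unfolding edge_set_def by blast
  then obtain fs1 where fs1: "forcing_seq V E {{x, v}} B fs1" "final_blue B fs1 = V"
    using edge_leaky_forcing_set_complete_seq[OF assms(2,1), of "{{x, v}}"] by auto
  then obtain y where y: "(y, v) \<in> set fs1"
    using assms(3) by (auto simp: final_blue_def)
  have "y \<noteq> x" using forcing_seq_forceD[OF fs1(1) y] by auto
  moreover have "(x, v) \<in> all_forces V E B"
    using fs0 x unfolding all_forces_iff by blast
  moreover have "(y, v) \<in> all_forces V E B"
    using forcing_seq_antimono_leaks[OF fs1(1)] fs1(2) y unfolding all_forces_iff by blast
  ultimately show ?thesis by blast
qed

lemma two_forcers_edge_leaky_1:
  assumes "simple_graph V E" "B \<subseteq> V"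
    and two: "\<forall>v \<in> V - B. \<exists>x y. (x, v) \<in> all_forces V E B \<and> (y, v) \<in> all_forces V E B \<and> x \<noteq> y"
  shows "edge_leaky_forcing_set V E 1 B"
  unfolding edge_leaky_forcing_set_iff_stalled
proof (intro allI impI)
  fix L fs
  assume "L \<subseteq> edge_set E \<and> card L \<le> 1 \<and> forcing_seq V E L B fs \<and>
    stalled V E L (final_blue B fs)"
  then have L: "L \<subseteq> edge_set E" "card L \<le> 1" and fs: "forcing_seq V E L B fs"
    and stalled: "stalled V E L (final_blue B fs)" by auto
  define S where "S = final_blue B fs"
  have "B \<subseteq> S" by (auto simp: S_def final_blue_def)
  have "S \<subseteq> V" unfolding S_def using final_blue_subset[OF fs assms(2)] .
  have single_leak: "e = e'" if "e \<in> L" "e' \<in> L" for e e'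
    using L that finite_subset[OF L(1) finite_edge_set[OF assms(1)]]
    by (metis One_nat_def card_le_Suc0_iff_eq)
  have crossing: "\<exists>u w. (u, w) \<in> set fs' \<and> u \<in> S \<and> w \<notin> S \<and> {u, w} \<in> L"
    if "forcing_seq V E {} B fs'" "final_blue B fs' = V" "\<not> V \<subseteq> S" for fs'
    using stalled_complete_seq_crosses_leak[of V E L S B fs'] stalled that \<open>B \<subseteq> S\<close>
    unfolding S_def by auto
  show "final_blue B fs = V"
  proof (rule ccontr)
    assume "final_blue B fs \<noteq> V"
    then have "\<not> V \<subseteq> S" using \<open>S \<subseteq> V\<close> S_def by blast
    then obtain v where "v \<in> V - B" "v \<notin> S" using \<open>B \<subseteq> S\<close> by blast
    then obtain x where "(x, v) \<in> all_forces V E B" using two by blast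
    then obtain fsx where "forcing_seq V E {} B fsx" "final_blue B fsx = V"
      unfolding all_forces_iff by blast
    then obtain a b where ab: "a \<in> S" "b \<notin> S" "{a, b} \<in> L" "(a, b) \<in> set fsx"
      using crossing \<open>\<not> V \<subseteq> S\<close> by blast
    have forced_by_a: "(a, b) \<in> set fs'"
      if complete: "forcing_seq V E {} B fs'" "final_blue B fs' = V" for fs'
    proof -
      obtain c d where "(c, d) \<in> set fs'" "c \<in> S" "d \<notin> S" "{c, d} = {a, b}"
        using crossing[OF complete \<open>\<not> V \<subseteq> S\<close>] single_leak ab(3) by blast
      with ab(1,2) show ?thesis by (metis doubleton_eq_iff)
    qed
    have "b \<in> V - B"
      using forcing_seq_forceD[OF \<open>forcing_seq V E {} B fsx\<close> ab(4)] ab(2) \<open>B \<subseteq> S\<close> by blast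
    then obtain y z where "(y, b) \<in> all_forces V E B" "(z, b) \<in> all_forces V E B" "y \<noteq> z"
      using two by blast
    moreover have "y = a" if "(y, b) \<in> all_forces V E B" for y
      using that forced_by_a forcing_seq_forcer_unique unfolding all_forces_iff by metis
    ultimately show False by blast
  qed
qed

theorem theorem2p1:
  fixes V :: "'a set" and E :: "'a \<Rightarrow> 'a \<Rightarrow> bool" and B :: "'a set"
  assumes "simple_graph V E" and "B \<subseteq> V"
  shows "edge_leaky_forcing_set V E 1 B \<longleftrightarrow>
    (\<forall>v \<in> V - B. \<exists>x y. (x, v) \<in> all_forces V E B \<and> (y, v) \<in> all_forces V E B \<and> x \<noteq> y)"
proof
  have "finite V" using assms(1) by (simp add: simple_graph_def)
  then show "\<forall>v \<in> V - B. \<exists>x y. (x, v) \<in> all_forces V E B \<and> (y, v) \<in> all_forces V E B \<and> x \<noteq> y"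
    if "edge_leaky_forcing_set V E 1 B"
    using that by (intro ballI edge_leaky_1_two_forcers)
qed (rule two_forcers_edge_leaky_1[OF assms])

end
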